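(* Consider the system $$\frac{df}{dt}= r\alpha f m(1-f-m)-(1+h)f,\qquad \frac{dm}{dt}=(1-r)\alpha f m(1-f-m)+(s-1)m,$$ with $0<r<1$, $\alpha>0$, $h\ge 0$, $0\le s<1$. Set $\mu=\frac{(1-r)(1+h)}{r(1-s)}$ and define $$s^*=\frac{1}{r}+\frac{1-r}{4}\Big(\frac{4h}{r}-\alpha\Big),\qquad h_*=\frac{r}{4}\Big(\alpha-\frac{4}{r(1-r)}\Big),\qquad h^*=\frac{r}{4}\Big(\alpha-\frac{4}{r}\Big).$$ The interior equilibria of the system are $E_i^*=(f_i^*,\mu f_i^* )$, $i=1,2$, with $$f^*_{1,2}=\frac{1}{2(1+\mu)}\left\{1\pm\sqrt{1-\frac{4(1+\mu)(1+h)}{r\alpha\mu}}\right\},$$ and these interior equilibria exist (are real and positive) if either (i) $s\ge s^*$ and $h_*<h<h^*$, or (ii) $0\le h\le h_*$ and $\alpha>\frac{4}{r(1-r)}$.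
   Context: This is the nondimensionalized female-harvesting male-stocking (FHMS) mating model without Allee effect: $f,m\ge 0$ are scaled female and male population densities, $r$ is the primary sex ratio, $\alpha$ the scaled reproduction rate, $h$ the scaled female harvesting rate and $s$ the scaled male stocking rate. An interior equilibrium is an equilibrium with $f>0$, $m>0$. *)

theory Defs
  imports Complex_Main
begin

definition fhms_df :: "real \<Rightarrow> real \<Rightarrow> real \<Rightarrow> real \<Rightarrow> real \<Rightarrow> real" where
  "fhms_df r \<alpha> h f m = r * \<alpha> * f * m * (1 - f - m) - (1 + h) * f"

definition fhms_dm :: "real \<Rightarrow> real \<Rightarrow> real \<Rightarrow> real \<Rightarrow> real \<Rightarrow> real" where
  "fhms_dm r \<alpha> s f m = (1 - r) * \<alpha> * f * m * (1 - f - m) + (s - 1) * m"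

definition interior_equilibria :: "real \<Rightarrow> real \<Rightarrow> real \<Rightarrow> real \<Rightarrow> (real \<times> real) set" where
  "interior_equilibria r \<alpha> h s =
     {(f, m). f > 0 \<and> m > 0 \<and> fhms_df r \<alpha> h f m = 0 \<and> fhms_dm r \<alpha> s f m = 0}"

definition fhms_mu :: "real \<Rightarrow> real \<Rightarrow> real \<Rightarrow> real" where
  "fhms_mu r h s = ((1 - r) * (1 + h)) / (r * (1 - s))"

definition s_star :: "real \<Rightarrow> real \<Rightarrow> real \<Rightarrow> real" where
  "s_star r \<alpha> h = 1 / r + (1 - r) / 4 * (4 * h / r - \<alpha>)"

definition h_lower :: "real \<Rightarrow> real \<Rightarrow> real" where
  "h_lower r \<alpha> = r / 4 * (\<alpha> - 4 / (r * (1 - r)))"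

definition h_upper :: "real \<Rightarrow> real \<Rightarrow> real" where
  "h_upper r \<alpha> = r / 4 * (\<alpha> - 4 / r)"

definition fhms_disc :: "real \<Rightarrow> real \<Rightarrow> real \<Rightarrow> real \<Rightarrow> real" where
  "fhms_disc r \<alpha> h s =
     1 - 4 * (1 + fhms_mu r h s) * (1 + h) / (r * \<alpha> * fhms_mu r h s)"

definition f_star1 :: "real \<Rightarrow> real \<Rightarrow> real \<Rightarrow> real \<Rightarrow> real" where
  "f_star1 r \<alpha> h s = 1 / (2 * (1 + fhms_mu r h s)) * (1 + sqrt (fhms_disc r \<alpha> h s))"

definition f_star2 :: "real \<Rightarrow> real \<Rightarrow> real \<Rightarrow> real \<Rightarrow> real" where
  "f_star2 r \<alpha> h s = 1 / (2 * (1 + fhms_mu r h s)) * (1 - sqrt (fhms_disc r \<alpha> h s))"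

end

theory Submission
  imports Defs
begin

text \<open>Dividing the two equilibrium equations by f and m respectively and comparing them
  forces m = \<mu> f; substituting back leaves a single quadratic in f whose discriminant is
  fhms_disc. The condition s \<ge> s* is exactly what makes this discriminant nonnegative,
  and hypothesis (ii) implies s* \<le> 0, so it covers case (ii) too. Since the discriminant
  is below 1, both roots are positive.\<close>

lemma quadratic_roots_sqrt:
  fixes a b c x :: real
  defines "d \<equiv> 1 - 4 * b * c / a"
  assumes a_pos: "a > 0" and b_pos: "b > 0" and d_nonneg: "d \<ge> 0"
  shows "a * x * (1 - b * x) = c \<longleftrightarrow>
    x = 1 / (2 * b) * (1 + sqrt d) \<or> x = 1 / (2 * b) * (1 - sqrt d)"
proof -
  have "(2 * b * x - 1)\<^sup>2 = 1 - 4 * b * (x * (1 - b * x))"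
    by (simp add: power2_eq_square algebra_simps)
  then have "(2 * b * x - 1)\<^sup>2 = d \<longleftrightarrow> 4 * b * (x * (1 - b * x)) = 4 * b * (c / a)"
    by (simp add: d_def)
  also have "\<dots> \<longleftrightarrow> x * (1 - b * x) = c / a"
    using b_pos by (subst mult_cancel_left) simp
  also have "\<dots> \<longleftrightarrow> a * x * (1 - b * x) = c"
    using a_pos by (auto simp: field_simps)
  finally have "a * x * (1 - b * x) = c \<longleftrightarrow> (2 * b * x - 1)\<^sup>2 = d"
    by simp
  also have "\<dots> \<longleftrightarrow> (2 * b * x - 1)\<^sup>2 = (sqrt d)\<^sup>2"
    using d_nonneg by simp
  also have "\<dots> \<longleftrightarrow> 2 * b * x - 1 = sqrt d \<or> 2 * b * x - 1 = - sqrt d"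
    by (simp add: power2_eq_iff)
  also have "\<dots> \<longleftrightarrow> x = 1 / (2 * b) * (1 + sqrt d) \<or> x = 1 / (2 * b) * (1 - sqrt d)"
    using b_pos by (auto simp: field_simps)
  finally show ?thesis .
qed

lemma s_star_nonpos:
  fixes r \<alpha> h :: real
  assumes "0 < r" "r < 1" "h \<le> h_lower r \<alpha>"
  shows "s_star r \<alpha> h \<le> 0"
proof -
  have "4 * (1 - r) * h \<le> 4 * (1 - r) * h_lower r \<alpha>"
    using assms by (intro mult_left_mono) auto
  also have "\<dots> = r * \<alpha> * (1 - r) - 4"
    using assms(1,2) by (simp add: h_lower_def field_simps)
  finally have "4 * h * (1 - r) \<le> r * \<alpha> * (1 - r) - 4"
    by (simp add: algebra_simps)
  moreover have "s_star r \<alpha> h * (4 * r) = 4 + (1 - r) * (4 * h - \<alpha> * r)"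
    using assms(1) by (simp add: s_star_def field_simps)
  ultimately have "s_star r \<alpha> h * (4 * r) \<le> 0"
    by (simp add: algebra_simps)
  with assms(1) show ?thesis
    by (simp add: mult_le_0_iff)
qed

lemma fhms_mu_pos:
  fixes r h s :: real
  assumes "0 < r" "r < 1" "h > -1" "s < 1"
  shows "fhms_mu r h s > 0"
  using assms by (simp add: fhms_mu_def)

lemma fhms_disc_bounds:
  fixes r \<alpha> h s :: real
  assumes "0 < r" "r < 1" "\<alpha> > 0" "h > -1" "s < 1" "s \<ge> s_star r \<alpha> h"
  shows "0 \<le> fhms_disc r \<alpha> h s" "fhms_disc r \<alpha> h s < 1"
proof -
  define \<mu> where "\<mu> = fhms_mu r h s"
  have \<mu>: "\<mu> > 0" "\<mu> * (r * (1 - s)) = (1 - r) * (1 + h)"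
    using assms fhms_mu_pos[of r h s] by (auto simp: \<mu>_def fhms_mu_def)
  have "s_star r \<alpha> h * (4 * r) \<le> s * (4 * r)"
    using assms by (intro mult_right_mono) auto
  moreover have "s_star r \<alpha> h * (4 * r) = 4 + (1 - r) * (4 * h - \<alpha> * r)"
    using assms(1) by (simp add: s_star_def field_simps)
  ultimately have "4 * (1 - s) * r + 4 * (1 - r) * (1 + h) \<le> (1 - r) * \<alpha> * r"
    by (simp add: algebra_simps)
  then have "(1 + h) * (4 * (1 - s) * r + 4 * (1 - r) * (1 + h)) \<le> (1 + h) * ((1 - r) * \<alpha> * r)"
    using assms(4) by (intro mult_left_mono) auto
  moreover have "r * \<alpha> * \<mu> * (r * (1 - s)) = (1 + h) * ((1 - r) * \<alpha> * r)"
    "4 * (1 + \<mu>) * (1 + h) * (r * (1 - s)) = (1 + h) * (4 * (1 - s) * r + 4 * (1 - r) * (1 + h))"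
    using assms(1,5) by (simp_all add: \<mu>_def fhms_mu_def field_simps)
  ultimately have "4 * (1 + \<mu>) * (1 + h) * (r * (1 - s)) \<le> r * \<alpha> * \<mu> * (r * (1 - s))"
    by (simp only:)
  then have key: "4 * (1 + \<mu>) * (1 + h) \<le> r * \<alpha> * \<mu>"
    using assms(1,5) by (simp add: ac_simps)
  have "r * \<alpha> * \<mu> > 0"
    using assms \<mu> by simp
  then have "4 * (1 + \<mu>) * (1 + h) / (r * \<alpha> * \<mu>) \<le> 1"
    "4 * (1 + \<mu>) * (1 + h) / (r * \<alpha> * \<mu>) > 0"
    using key \<mu>(1) assms(4) by (simp_all add: divide_le_eq_1_pos)
  moreover have "fhms_disc r \<alpha> h s = 1 - 4 * (1 + \<mu>) * (1 + h) / (r * \<alpha> * \<mu>)"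
    by (simp add: fhms_disc_def \<mu>_def)
  ultimately show "0 \<le> fhms_disc r \<alpha> h s" "fhms_disc r \<alpha> h s < 1"
    by linarith+
qed

lemma interior_equilibria_eq_quadratic:
  fixes r \<alpha> h s :: real
  assumes "0 < r" "r < 1" "h > -1" "s < 1"
  defines "\<mu> \<equiv> fhms_mu r h s"
  shows "interior_equilibria r \<alpha> h s =
    {(f, \<mu> * f) | f. f > 0 \<and> r * \<alpha> * \<mu> * f * (1 - (1 + \<mu>) * f) = 1 + h}"
proof -
  have \<mu>: "\<mu> > 0" "\<mu> * (r * (1 - s)) = (1 - r) * (1 + h)"
    using assms fhms_mu_pos[of r h s] by (auto simp: \<mu>_def fhms_mu_def)
  have equilibrium_iff: "fhms_df r \<alpha> h f m = 0 \<and> fhms_dm r \<alpha> s f m = 0 \<longleftrightarrow>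
      m = \<mu> * f \<and> r * \<alpha> * \<mu> * f * (1 - (1 + \<mu>) * f) = 1 + h"
    if "f > 0" "m > 0" for f m
  proof -
    have "fhms_df r \<alpha> h f m = f * (r * \<alpha> * m * (1 - f - m) - (1 + h))"
      "fhms_dm r \<alpha> s f m = m * ((1 - r) * \<alpha> * f * (1 - f - m) - (1 - s))"
      by (simp_all add: fhms_df_def fhms_dm_def algebra_simps)
    then have "fhms_df r \<alpha> h f m = 0 \<and> fhms_dm r \<alpha> s f m = 0 \<longleftrightarrow>
        r * \<alpha> * m * (1 - f - m) = 1 + h \<and> (1 - r) * \<alpha> * f * (1 - f - m) = 1 - s"
      using that by simp
    also have "\<dots> \<longleftrightarrow> m = \<mu> * f \<and> r * \<alpha> * m * (1 - f - m) = 1 + h"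
    proof safe
      assume eq_f: "r * \<alpha> * m * (1 - f - m) = 1 + h"
        and eq_m: "(1 - r) * \<alpha> * f * (1 - f - m) = 1 - s"
      have "\<alpha> * (1 - f - m) \<noteq> 0"
        using eq_f assms(3) by auto
      moreover have "\<alpha> * (1 - f - m) * ((1 - r) * (1 + h) * f) =
          \<alpha> * (1 - f - m) * (r * (1 - s) * m)"
      proof -
        have "\<alpha> * (1 - f - m) * ((1 - r) * (1 + h) * f) =
            ((1 - r) * \<alpha> * f * (1 - f - m)) * (1 + h)"
          by (simp add: algebra_simps)
        also have "\<dots> = (r * \<alpha> * m * (1 - f - m)) * (1 - s)"
          using eq_f eq_m by simp
        also have "\<dots> = \<alpha> * (1 - f - m) * (r * (1 - s) * m)"
          by (simp add: algebra_simps)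
        finally show ?thesis .
      qed
      ultimately have cross: "(1 - r) * (1 + h) * f = r * (1 - s) * m"
        using mult_left_cancel by blast
      have "r * (1 - s) * (\<mu> * f) = (\<mu> * (r * (1 - s))) * f"
        by (simp add: algebra_simps)
      also have "\<dots> = r * (1 - s) * m"
        unfolding \<mu>(2) by (rule cross)
      finally show "m = \<mu> * f"
        using assms(1,4) by simp
    next
      assume eq_f: "r * \<alpha> * (\<mu> * f) * (1 - f - \<mu> * f) = 1 + h"
      have "(1 - r) * \<alpha> * f * (1 - f - \<mu> * f) * (\<mu> * r) =
          (1 - r) * (r * \<alpha> * (\<mu> * f) * (1 - f - \<mu> * f))"
        by (simp add: algebra_simps)
      also have "\<dots> = \<mu> * (r * (1 - s))"
        unfolding eq_f \<mu>(2) by (simp add: algebra_simps)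
      finally have "(1 - r) * \<alpha> * f * (1 - f - \<mu> * f) * (\<mu> * r) = (1 - s) * (\<mu> * r)"
        by (simp add: algebra_simps)
      then show "(1 - r) * \<alpha> * f * (1 - f - \<mu> * f) = 1 - s"
        using \<mu>(1) assms(1) by simp
    qed
    also have "\<dots> \<longleftrightarrow> m = \<mu> * f \<and> r * \<alpha> * \<mu> * f * (1 - (1 + \<mu>) * f) = 1 + h"
      by (auto simp: algebra_simps)
    finally show ?thesis .
  qed
  show ?thesis
  proof (rule set_eqI, clarify)
    fix f m
    show "(f, m) \<in> interior_equilibria r \<alpha> h s \<longleftrightarrow>
        (f, m) \<in> {(f, \<mu> * f) | f. f > 0 \<and> r * \<alpha> * \<mu> * f * (1 - (1 + \<mu>) * f) = 1 + h}"
      using equilibrium_iff[of f m] equilibrium_iff[of f "\<mu> * f"] \<mu>(1)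
      by (auto simp: interior_equilibria_def)
  qed
qed

theorem mainTheorem1:
  fixes r \<alpha> h s :: real
  assumes "0 < r" "r < 1" "\<alpha> > 0" "h \<ge> 0" "0 \<le> s" "s < 1"
    and "(s \<ge> s_star r \<alpha> h \<and> h_lower r \<alpha> < h \<and> h < h_upper r \<alpha>)
         \<or> (0 \<le> h \<and> h \<le> h_lower r \<alpha> \<and> \<alpha> > 4 / (r * (1 - r)))"
  shows "fhms_disc r \<alpha> h s \<ge> 0
    \<and> f_star1 r \<alpha> h s > 0 \<and> f_star2 r \<alpha> h s > 0
    \<and> interior_equilibria r \<alpha> h s =
        {(f_star1 r \<alpha> h s, fhms_mu r h s * f_star1 r \<alpha> h s),
         (f_star2 r \<alpha> h s, fhms_mu r h s * f_star2 r \<alpha> h s)}"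
proof -
  define \<mu> where "\<mu> = fhms_mu r h s"
  define D where "D = fhms_disc r \<alpha> h s"
  have \<mu>: "\<mu> > 0"
    using assms fhms_mu_pos[of r h s] by (simp add: \<mu>_def)
  have "s \<ge> s_star r \<alpha> h"
    using assms(7) s_star_nonpos[OF assms(1,2)] assms(5) by force
  then have D: "0 \<le> D" "sqrt D < 1"
    using fhms_disc_bounds[of r \<alpha> h s] assms by (auto simp: D_def)
  have D_eq: "D = 1 - 4 * (1 + \<mu>) * (1 + h) / (r * \<alpha> * \<mu>)"
    by (simp add: D_def \<mu>_def fhms_disc_def)
  have roots: "f_star1 r \<alpha> h s = 1 / (2 * (1 + \<mu>)) * (1 + sqrt D)"
    "f_star2 r \<alpha> h s = 1 / (2 * (1 + \<mu>)) * (1 - sqrt D)"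
    by (simp_all add: f_star1_def f_star2_def \<mu>_def D_def)
  have pos: "f_star1 r \<alpha> h s > 0" "f_star2 r \<alpha> h s > 0"
    unfolding roots using \<mu> D by (simp_all add: add_pos_nonneg)
  have "r * \<alpha> * \<mu> > 0"
    using assms \<mu> by simp
  from quadratic_roots_sqrt[of "r * \<alpha> * \<mu>" "1 + \<mu>" "1 + h"] this D(1) \<mu>
  have "r * \<alpha> * \<mu> * f * (1 - (1 + \<mu>) * f) = 1 + h \<longleftrightarrow>
      f = f_star1 r \<alpha> h s \<or> f = f_star2 r \<alpha> h s" for f
    unfolding roots D_eq by (simp add: mult.assoc)
  then have "interior_equilibria r \<alpha> h s =
      {(f_star1 r \<alpha> h s, \<mu> * f_star1 r \<alpha> h s), (f_star2 r \<alpha> h s, \<mu> * f_star2 r \<alpha> h s)}"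
    using interior_equilibria_eq_quadratic[of r h s \<alpha>] assms pos by (auto simp: \<mu>_def)
  then show ?thesis
    using D(1) pos by (simp add: D_def \<mu>_def)
qed

end
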